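(* Let $q\ge2$, let $\delta$ be such that the matrix $\mathbf M$ with diagonal entries $1-(q-1)\delta$ and all off-diagonal entries $\delta$ is an ergodic stochastic matrix on $\{1,\dots,q\}$, so that $\lambda_2(\mathbf M)=1-q\delta$. If $b$ is a positive integer with $b\,|\lambda_2(\mathbf M)|\le1$, then the reconstruction problem for $T_b$ and $\mathbf M$ is not solvable.
   Context: Tree process on a rooted tree with root $\rho$: the root label is drawn from an initial distribution, and each non-root vertex $v$ with parent $v'$ receives label $j$ with probability $\mathbf M_{\sigma_{v'},j}$, independently across edges given parent labels. $T_b$ is the infinite rooted tree in which every vertex has exactly $b$ children. $L_n$ is the set of vertices at distance $n$ from $\rho$ and $\sigma_n=(\sigma_v)_{v\in L_n}$. With $\mathbf P_n^\ell$ the conditional law of $\sigma_n$ given $\sigma_\rho=\ell$ and $D_V(P,Q)=\frac12\sum|P-Q|$, the reconstruction problem is solvable if there exist $i,j$ with $\lim_n D_V(\mathbf P_n^i,\mathbf P_n^j)>0$. *)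

theory Defs
  imports "HOL-Analysis.Analysis"
begin

text \<open>Transition matrices on the label set {1..q}, represented as functions.\<close>
type_synonym tmatrix = "nat \<Rightarrow> nat \<Rightarrow> real"

definition potts_matrix :: "nat \<Rightarrow> real \<Rightarrow> tmatrix" where
  "potts_matrix q \<delta> i j = (if i = j then 1 - (real q - 1) * \<delta> else \<delta>)"

definition stochastic :: "nat \<Rightarrow> tmatrix \<Rightarrow> bool" where
  "stochastic q M \<longleftrightarrow> (\<forall>i\<in>{1..q}. \<forall>j\<in>{1..q}. 0 \<le> M i j) \<and>
     (\<forall>i\<in>{1..q}. (\<Sum>j=1..q. M i j) = 1)"

fun mpow :: "nat \<Rightarrow> tmatrix \<Rightarrow> nat \<Rightarrow> tmatrix" where
  "mpow q M 0 i j = (if i = j then 1 else 0)"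
| "mpow q M (Suc k) i j = (\<Sum>l=1..q. mpow q M k i l * M l j)"

text \<open>Ergodic (irreducible and aperiodic) finite chain = stochastic and primitive.\<close>
definition ergodic :: "nat \<Rightarrow> tmatrix \<Rightarrow> bool" where
  "ergodic q M \<longleftrightarrow> stochastic q M \<and>
     (\<exists>k>0. \<forall>i\<in>{1..q}. \<forall>j\<in>{1..q}. 0 < mpow q M k i j)"

text \<open>Vertices of T_b are words over {0..<b}; the root is [], the parent of w is butlast w.\<close>
definition verts :: "nat \<Rightarrow> nat \<Rightarrow> nat list set" where
  "verts b n = {w. length w \<le> n \<and> set w \<subseteq> {..<b}}"

definition level :: "nat \<Rightarrow> nat \<Rightarrow> nat list set" where
  "level b n = {w. length w = n \<and> set w \<subseteq> {..<b}}"

text \<open>Conditional law P_n^l of sigma_n given the root label l: sum over all labelings of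
  the vertices of depth \<le> n with root label l that agree with tau on L_n, of the
  product of the edge transition probabilities.\<close>
definition tree_law :: "nat \<Rightarrow> nat \<Rightarrow> tmatrix \<Rightarrow> nat \<Rightarrow> nat \<Rightarrow> (nat list \<Rightarrow> nat) \<Rightarrow> real" where
  "tree_law b q M n l \<tau> =
     (\<Sum>\<sigma>\<in>{\<sigma> \<in> verts b n \<rightarrow>\<^sub>E {1..q}. \<sigma> [] = l \<and> restrict \<sigma> (level b n) = \<tau>}.
        \<Prod>w\<in>verts b n - {[]}. M (\<sigma> (butlast w)) (\<sigma> w))"

definition configs :: "nat \<Rightarrow> nat \<Rightarrow> nat \<Rightarrow> (nat list \<Rightarrow> nat) set" where
  "configs b q n = level b n \<rightarrow>\<^sub>E {1..q}"

definition dtv :: "nat \<Rightarrow> nat \<Rightarrow> tmatrix \<Rightarrow> nat \<Rightarrow> nat \<Rightarrow> nat \<Rightarrow> real" where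
  "dtv b q M n i j = 1/2 * (\<Sum>\<tau>\<in>configs b q n. \<bar>tree_law b q M n i \<tau> - tree_law b q M n j \<tau>\<bar>)"

definition reconstruction_solvable :: "nat \<Rightarrow> nat \<Rightarrow> tmatrix \<Rightarrow> bool" where
  "reconstruction_solvable b q M \<longleftrightarrow>
     (\<exists>i\<in>{1..q}. \<exists>j\<in>{1..q}. lim (\<lambda>n. dtv b q M n i j) > 0)"

end

theory Submission
  imports Defs
begin

text \<open>
  Let \<open>d\<^sub>n(i,j)\<close> be the total variation distance between the laws of \<open>\<sigma>\<^sub>n\<close> given the root
  labels \<open>i\<close> and \<open>j\<close>. Given the root label \<open>l\<close>, the \<open>b\<close> branches of the root are
  independent, each distributed as the mixture \<open>\<Sum>\<^sub>k M\<^sub>l\<^sub>k P\<^sub>n\<^sup>k\<close>. For the Potts matrix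
  \<open>M = \<delta> J + (1 - q\<delta>) I\<close> this mixture is affine in \<open>P\<^sub>n\<^sup>l\<close>, so the branch laws for \<open>i\<close> and
  \<open>j\<close> are at distance \<open>\<lambda> d\<^sub>n(i,j)\<close> with \<open>\<lambda> = |1 - q\<delta>|\<close>. Since the overlap of two product
  measures dominates the product of the overlaps, \<open>d\<^sub>n\<^sub>+\<^sub>1 \<le> 1 - (1 - \<lambda> d\<^sub>n)\<^sup>b\<close>.
  Ergodicity forces \<open>\<lambda> < 1\<close>, and if \<open>b\<lambda> \<le> 1\<close> then by Bernoulli's inequality the map
  \<open>y \<mapsto> 1 - (1 - \<lambda>y)\<^sup>b\<close> lies strictly below the diagonal on \<open>(0,1]\<close>, so \<open>d\<^sub>n \<rightarrow> 0\<close>.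
\<close>

section \<open>Probability vectors and total variation distance\<close>

lemma prod_of_bool:
  "finite A \<Longrightarrow> (\<Prod>a\<in>A. of_bool (P a) :: 'b :: comm_semiring_1) = of_bool (\<forall>a\<in>A. P a)"
  by (induction A rule: finite_induct) auto

definition prob_vec :: "'a set \<Rightarrow> ('a \<Rightarrow> real) \<Rightarrow> bool" where
  "prob_vec A \<mu> \<longleftrightarrow> (\<forall>a\<in>A. 0 \<le> \<mu> a) \<and> sum \<mu> A = 1"

lemma prob_vec_cong: "(\<And>a. a \<in> A \<Longrightarrow> \<mu> a = \<nu> a) \<Longrightarrow> prob_vec A \<mu> \<longleftrightarrow> prob_vec A \<nu>"
  by (simp add: prob_vec_def cong: sum.cong)

lemma prob_vec_reindex: "bij_betw h A B \<Longrightarrow> prob_vec B \<mu> \<Longrightarrow> prob_vec A (\<lambda>a. \<mu> (h a))"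
  unfolding prob_vec_def by (auto simp: sum.reindex_bij_betw bij_betw_apply)

lemma prob_vec_prod:
  assumes "finite C" "finite A" "\<And>c. c \<in> C \<Longrightarrow> prob_vec A (\<mu> c)"
  shows "prob_vec (C \<rightarrow>\<^sub>E A) (\<lambda>g. \<Prod>c\<in>C. \<mu> c (g c))"
proof -
  have "(\<Sum>g\<in>C \<rightarrow>\<^sub>E A. \<Prod>c\<in>C. \<mu> c (g c)) = (\<Prod>c\<in>C. \<Sum>a\<in>A. \<mu> c a)"
    by (rule prod_sum_PiE[symmetric]) (use assms in auto)
  then show ?thesis
    using assms by (auto simp: prob_vec_def intro!: prod_nonneg)
qed

lemma prob_vec_mixture:
  assumes "prob_vec K w" "\<And>k. k \<in> K \<Longrightarrow> prob_vec A (\<mu> k)"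
  shows "prob_vec A (\<lambda>a. \<Sum>k\<in>K. w k * \<mu> k a)"
proof -
  have "(\<Sum>a\<in>A. \<Sum>k\<in>K. w k * \<mu> k a) = (\<Sum>k\<in>K. w k * (\<Sum>a\<in>A. \<mu> k a))"
    by (simp add: sum.swap[of _ A] sum_distrib_left)
  then show ?thesis
    using assms by (auto simp: prob_vec_def intro!: sum_nonneg)
qed

definition tv_dist :: "'a set \<Rightarrow> ('a \<Rightarrow> real) \<Rightarrow> ('a \<Rightarrow> real) \<Rightarrow> real" where
  "tv_dist A \<mu> \<nu> = 1/2 * (\<Sum>a\<in>A. \<bar>\<mu> a - \<nu> a\<bar>)"

lemma tv_dist_nonneg: "0 \<le> tv_dist A \<mu> \<nu>"
  by (simp add: tv_dist_def sum_nonneg)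

lemma tv_dist_cong:
  "(\<And>a. a \<in> A \<Longrightarrow> \<mu> a = \<mu>' a) \<Longrightarrow> (\<And>a. a \<in> A \<Longrightarrow> \<nu> a = \<nu>' a) \<Longrightarrow> tv_dist A \<mu> \<nu> = tv_dist A \<mu>' \<nu>'"
  by (simp add: tv_dist_def cong: sum.cong)

lemma tv_dist_reindex: "bij_betw h A B \<Longrightarrow> tv_dist A (\<lambda>a. \<mu> (h a)) (\<lambda>a. \<nu> (h a)) = tv_dist B \<mu> \<nu>"
  unfolding tv_dist_def by (subst sum.reindex_bij_betw[of h A B "\<lambda>a. \<bar>\<mu> a - \<nu> a\<bar>"]) simp_all

lemma tv_dist_scale:
  "(\<And>a. a \<in> A \<Longrightarrow> \<mu>' a - \<nu>' a = k * (\<mu> a - \<nu> a)) \<Longrightarrow> tv_dist A \<mu>' \<nu>' = \<bar>k\<bar> * tv_dist A \<mu> \<nu>"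
  by (simp add: tv_dist_def abs_mult sum_distrib_left cong: sum.cong)

lemma tv_dist_eq_1_minus_overlap:
  assumes "prob_vec A \<mu>" "prob_vec A \<nu>"
  shows "tv_dist A \<mu> \<nu> = 1 - (\<Sum>a\<in>A. min (\<mu> a) (\<nu> a))"
proof -
  have "(\<Sum>a\<in>A. \<bar>\<mu> a - \<nu> a\<bar>) = (\<Sum>a\<in>A. \<mu> a + \<nu> a - 2 * min (\<mu> a) (\<nu> a))"
    by (rule sum.cong) (auto simp: min_def)
  also have "\<dots> = 2 - 2 * (\<Sum>a\<in>A. min (\<mu> a) (\<nu> a))"
    using assms by (simp add: prob_vec_def sum.distrib sum_subtractf sum_distrib_left)
  finally show ?thesis
    by (simp add: tv_dist_def)
qed

lemma tv_dist_le_1: "prob_vec A \<mu> \<Longrightarrow> prob_vec A \<nu> \<Longrightarrow> tv_dist A \<mu> \<nu> \<le> 1"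
  by (simp add: tv_dist_eq_1_minus_overlap sum_nonneg prob_vec_def)

lemma tv_dist_prod_le:
  assumes C: "finite C" and A: "finite A"
    and \<mu>: "\<And>c. c \<in> C \<Longrightarrow> prob_vec A (\<mu> c)" and \<nu>: "\<And>c. c \<in> C \<Longrightarrow> prob_vec A (\<nu> c)"
  shows "tv_dist (C \<rightarrow>\<^sub>E A) (\<lambda>g. \<Prod>c\<in>C. \<mu> c (g c)) (\<lambda>g. \<Prod>c\<in>C. \<nu> c (g c))
           \<le> 1 - (\<Prod>c\<in>C. 1 - tv_dist A (\<mu> c) (\<nu> c))"
proof -
  have "(\<Prod>c\<in>C. 1 - tv_dist A (\<mu> c) (\<nu> c)) = (\<Prod>c\<in>C. \<Sum>a\<in>A. min (\<mu> c a) (\<nu> c a))"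
    using \<mu> \<nu> by (simp add: tv_dist_eq_1_minus_overlap)
  also have "\<dots> = (\<Sum>g\<in>C \<rightarrow>\<^sub>E A. \<Prod>c\<in>C. min (\<mu> c (g c)) (\<nu> c (g c)))"
    using A by (intro prod_sum_PiE C)
  also have "\<dots> \<le> (\<Sum>g\<in>C \<rightarrow>\<^sub>E A. min (\<Prod>c\<in>C. \<mu> c (g c)) (\<Prod>c\<in>C. \<nu> c (g c)))"
  proof (rule sum_mono)
    fix g assume g: "g \<in> C \<rightarrow>\<^sub>E A"
    have "0 \<le> \<mu> c (g c)" "0 \<le> \<nu> c (g c)" if "c \<in> C" for c
      using that \<mu>[OF that] \<nu>[OF that] PiE_mem[OF g that] by (auto simp: prob_vec_def)
    then show "(\<Prod>c\<in>C. min (\<mu> c (g c)) (\<nu> c (g c))) \<le> min (\<Prod>c\<in>C. \<mu> c (g c)) (\<Prod>c\<in>C. \<nu> c (g c))"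
      by (auto intro!: prod_mono)
  qed
  finally show ?thesis
    using tv_dist_eq_1_minus_overlap[OF prob_vec_prod[OF C A \<mu>] prob_vec_prod[OF C A \<nu>]] by simp
qed

section \<open>Sequences dominated by a map below the diagonal\<close>

lemma LIMSEQ_zero_if_le_subdiagonal_map:
  fixes f :: "real \<Rightarrow> real" and d :: "nat \<Rightarrow> real"
  assumes f_cont: "continuous_on {0..1} f" and f_0: "f 0 \<le> 0"
    and f_below: "\<And>y. 0 < y \<Longrightarrow> y \<le> 1 \<Longrightarrow> f y < y"
    and d_nonneg: "\<And>n. 0 \<le> d n" and d_0: "d 0 \<le> 1" and d_Suc: "\<And>n. d (Suc n) \<le> f (d n)"
  shows "d \<longlonglongrightarrow> 0"
proof -
  have f_le: "f y \<le> y" if "0 \<le> y" "y \<le> 1" for y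
    using f_0 f_below[of y] that by (cases "y = 0") auto
  have d_le_1: "d n \<le> 1" for n
  proof (induction n)
    case (Suc n)
    then show ?case using d_Suc[of n] f_le[OF d_nonneg Suc] by linarith
  qed (rule d_0)
  have "decseq d"
    unfolding decseq_Suc_iff using d_Suc f_le d_nonneg d_le_1 by (blast intro: order_trans)
  then obtain L where L: "d \<longlonglongrightarrow> L"
    using decseq_convergent[of d 0] d_nonneg by blast
  have L_01: "L \<in> {0..1}"
    using LIMSEQ_le_const[OF L] LIMSEQ_le_const2[OF L] d_nonneg d_le_1 by auto
  have "(\<lambda>n. f (d n)) \<longlonglongrightarrow> f L"
    using d_nonneg d_le_1 by (intro continuous_on_tendsto_compose[OF f_cont L L_01]) auto
  then have "L \<le> f L"
    using LIMSEQ_Suc[OF L] d_Suc by (blast intro: LIMSEQ_le)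
  then have "L = 0"
    using f_below[of L] L_01 by (cases "L = 0") auto
  with L show ?thesis
    by simp
qed

lemma Bernoulli_inequality_strict:
  fixes x :: real
  assumes "-1 \<le> x" "x \<noteq> 0" "2 \<le> n"
  shows "1 + real n * x < (1 + x) ^ n"
proof -
  obtain m where n: "n = Suc m" and m: "1 \<le> m"
    using assms(3) by (cases n) auto
  have "(1 + x) * (1 + real m * x) = 1 + real n * x + real m * x\<^sup>2"
    by (simp add: n algebra_simps power2_eq_square)
  moreover have "0 < real m * x\<^sup>2"
    using m assms(2) by simp
  ultimately have "1 + real n * x < (1 + x) * (1 + real m * x)"
    by linarith
  also have "\<dots> \<le> (1 + x) * (1 + x) ^ m"
    using assms(1) by (intro mult_left_mono Bernoulli_inequality) auto
  finally show ?thesis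
    by (simp add: n)
qed

lemma one_minus_power_below_diagonal:
  fixes \<kappa> y :: real
  assumes \<kappa>: "0 \<le> \<kappa>" "\<kappa> < 1" and b: "0 < b" "real b * \<kappa> \<le> 1" and y: "0 < y" "y \<le> 1"
  shows "1 - (1 - \<kappa> * y) ^ b < y"
proof -
  have "\<kappa> * y < 1"
    using \<kappa> y mult_left_mono[of y 1 \<kappa>] by linarith
  have "real b * (\<kappa> * y) \<le> y"
    using mult_right_mono[OF b(2), of y] y by (simp add: mult.assoc)
  consider "\<kappa> = 0" | "b = 1" | "0 < \<kappa>" "2 \<le> b"
    using \<kappa> b by linarith
  then show ?thesis
  proof cases
    case 3
    then have "1 - real b * (\<kappa> * y) < (1 - \<kappa> * y) ^ b"
      using Bernoulli_inequality_strict[of "- (\<kappa> * y)" b] \<open>\<kappa> * y < 1\<close> y by simp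
    then show ?thesis
      using \<open>real b * (\<kappa> * y) \<le> y\<close> by linarith
  qed (use \<kappa> y b in \<open>auto simp: mult_less_cancel_right2\<close>)
qed

section \<open>Branches of the tree\<close>

lemma finite_verts: "finite (verts b n)"
proof -
  have "verts b n = {xs. set xs \<subseteq> {..<b} \<and> length xs \<le> n}"
    by (auto simp: verts_def)
  then show ?thesis
    using finite_lists_length_le[of "{..<b}" n] by simp
qed

lemma level_subset_verts: "level b n \<subseteq> verts b n"
  by (auto simp: level_def verts_def)

lemma finite_level: "finite (level b n)"
  using finite_subset[OF level_subset_verts finite_verts] .

lemma finite_configs: "finite (configs b q n)"
  unfolding configs_def by (intro finite_PiE finite_level) auto

lemma Nil_in_verts [simp]: "[] \<in> verts b n"
  by (simp add: verts_def)

lemma Nil_in_level_iff [simp]: "[] \<in> level b n \<longleftrightarrow> n = 0"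
  by (auto simp: level_def)

lemma Cons_in_verts_Suc_iff [simp]: "c # u \<in> verts b (Suc n) \<longleftrightarrow> c < b \<and> u \<in> verts b n"
  by (auto simp: verts_def)

lemma Cons_in_level_Suc_iff [simp]: "c # u \<in> level b (Suc n) \<longleftrightarrow> c < b \<and> u \<in> level b n"
  by (auto simp: level_def)

lemma verts_0: "verts b 0 = {[]}" and level_0: "level b 0 = {[]}"
  by (auto simp: verts_def level_def)

lemma butlast_in_verts: "w \<in> verts b n \<Longrightarrow> butlast w \<in> verts b n"
  by (auto simp: verts_def dest: in_set_butlastD)

lemma verts_Suc_minus_Nil: "verts b (Suc n) - {[]} = (\<Union>c<b. (#) c ` verts b n)"
proof (intro set_eqI iffI)
  fix w assume "w \<in> verts b (Suc n) - {[]}"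
  then show "w \<in> (\<Union>c<b. (#) c ` verts b n)" by (cases w) auto
qed auto

definition subtree :: "nat list set \<Rightarrow> (nat list \<Rightarrow> 'a) \<Rightarrow> nat \<Rightarrow> nat list \<Rightarrow> 'a" where
  "subtree A \<sigma> c = (\<lambda>w\<in>A. \<sigma> (c # w))"

definition graft :: "nat list set \<Rightarrow> 'a \<Rightarrow> (nat \<Rightarrow> nat list \<Rightarrow> 'a) \<Rightarrow> nat list \<Rightarrow> 'a" where
  "graft A r g = (\<lambda>w\<in>A. case w of [] \<Rightarrow> r | c # u \<Rightarrow> g c u)"

lemma subtree_apply [simp]: "w \<in> A \<Longrightarrow> subtree A \<sigma> c w = \<sigma> (c # w)"
  by (simp add: subtree_def)

lemma restrict_subtree: "A \<subseteq> B \<Longrightarrow> restrict (subtree B \<sigma> c) A = subtree A \<sigma> c"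
  by (simp add: subtree_def Int_absorb1)

(* The root label is prescribed when the root belongs to B; otherwise extensionality forces it to
   be undefined, which is the case for the levels of positive depth. *)
lemma bij_betw_subtrees:
  assumes Cons_in_B: "\<And>c u. c # u \<in> B \<longleftrightarrow> c < b \<and> u \<in> A"
    and r: "if [] \<in> B then r \<in> X else r = undefined"
  shows "bij_betw (\<lambda>\<sigma>. \<lambda>c\<in>{..<b}. subtree A \<sigma> c) {\<sigma> \<in> B \<rightarrow>\<^sub>E X. \<sigma> [] = r} ({..<b} \<rightarrow>\<^sub>E (A \<rightarrow>\<^sub>E X))"
proof (rule bij_betw_byWitness[where f' = "graft B r"])
  show "\<forall>\<sigma>\<in>{\<sigma> \<in> B \<rightarrow>\<^sub>E X. \<sigma> [] = r}. graft B r (\<lambda>c\<in>{..<b}. subtree A \<sigma> c) = \<sigma>"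
  proof (intro ballI ext)
    fix \<sigma> w assume \<sigma>: "\<sigma> \<in> {\<sigma> \<in> B \<rightarrow>\<^sub>E X. \<sigma> [] = r}"
    show "graft B r (\<lambda>c\<in>{..<b}. subtree A \<sigma> c) w = \<sigma> w"
      using \<sigma> PiE_arb[of \<sigma> B "\<lambda>_. X" w] Cons_in_B by (cases w) (auto simp: graft_def subtree_def)
  qed
  show "\<forall>g\<in>{..<b} \<rightarrow>\<^sub>E (A \<rightarrow>\<^sub>E X). (\<lambda>c\<in>{..<b}. subtree A (graft B r g) c) = g"
  proof (intro ballI ext)
    fix g c w assume g: "g \<in> {..<b} \<rightarrow>\<^sub>E (A \<rightarrow>\<^sub>E X)"
    show "(\<lambda>c\<in>{..<b}. subtree A (graft B r g) c) c w = g c w"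
      using g PiE_arb[of g "{..<b}" _ c] PiE_arb[of "g c" A "\<lambda>_. X" w] PiE_mem[OF g, of c] Cons_in_B
      by (cases "c < b") (auto simp: graft_def subtree_def)
  qed
  show "(\<lambda>\<sigma>. \<lambda>c\<in>{..<b}. subtree A \<sigma> c) ` {\<sigma> \<in> B \<rightarrow>\<^sub>E X. \<sigma> [] = r} \<subseteq> {..<b} \<rightarrow>\<^sub>E (A \<rightarrow>\<^sub>E X)"
    using Cons_in_B by (auto simp: subtree_def)
  show "graft B r ` ({..<b} \<rightarrow>\<^sub>E (A \<rightarrow>\<^sub>E X)) \<subseteq> {\<sigma> \<in> B \<rightarrow>\<^sub>E X. \<sigma> [] = r}"
    using r Cons_in_B by (auto simp: graft_def PiE_iff split: list.split if_splits)
qed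

lemma bij_betw_subtrees_verts:
  "r \<in> X \<Longrightarrow> bij_betw (\<lambda>\<sigma>. \<lambda>c\<in>{..<b}. subtree (verts b n) \<sigma> c)
     {\<sigma> \<in> verts b (Suc n) \<rightarrow>\<^sub>E X. \<sigma> [] = r} ({..<b} \<rightarrow>\<^sub>E (verts b n \<rightarrow>\<^sub>E X))"
  by (rule bij_betw_subtrees) simp_all

lemma bij_betw_subtrees_level:
  "bij_betw (\<lambda>\<tau>. \<lambda>c\<in>{..<b}. subtree (level b n) \<tau> c)
     (level b (Suc n) \<rightarrow>\<^sub>E X) ({..<b} \<rightarrow>\<^sub>E (level b n \<rightarrow>\<^sub>E X))"
proof -
  have "{\<tau> \<in> level b (Suc n) \<rightarrow>\<^sub>E X. \<tau> [] = undefined} = level b (Suc n) \<rightarrow>\<^sub>E X"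
    using PiE_arb[of _ "level b (Suc n)" "\<lambda>_. X" "[]"] by auto
  then show ?thesis
    using bij_betw_subtrees[of "level b (Suc n)" b "level b n" undefined X] by simp
qed

lemma restrict_level_Suc_eq_iff:
  assumes "\<tau> \<in> extensional (level b (Suc n))"
  shows "restrict \<sigma> (level b (Suc n)) = \<tau> \<longleftrightarrow>
         (\<forall>c<b. subtree (level b n) \<sigma> c = subtree (level b n) \<tau> c)"
proof
  assume eq: "restrict \<sigma> (level b (Suc n)) = \<tau>"
  have "\<sigma> (c # w) = \<tau> (c # w)" if "c < b" "w \<in> level b n" for c w
    using fun_cong[OF eq, of "c # w"] that by simp
  then show "\<forall>c<b. subtree (level b n) \<sigma> c = subtree (level b n) \<tau> c"
    by (auto simp: subtree_def)
next
  assume branches: "\<forall>c<b. subtree (level b n) \<sigma> c = subtree (level b n) \<tau> c"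
  show "restrict \<sigma> (level b (Suc n)) = \<tau>"
  proof
    fix w show "restrict \<sigma> (level b (Suc n)) w = \<tau> w"
    proof (cases "w \<in> level b (Suc n)")
      case True
      then obtain c u where w: "w = c # u" and c: "c < b" and u: "u \<in> level b n"
        by (cases w) auto
      then show ?thesis
        using fun_cong[OF branches[rule_format, OF c], of u] by simp
    qed (use assms in \<open>simp add: extensional_def\<close>)
  qed
qed

section \<open>The recursion for the laws of the leaves\<close>

definition labelling_weight :: "nat \<Rightarrow> tmatrix \<Rightarrow> nat \<Rightarrow> (nat list \<Rightarrow> nat) \<Rightarrow> real" where
  "labelling_weight b M n \<sigma> = (\<Prod>w\<in>verts b n - {[]}. M (\<sigma> (butlast w)) (\<sigma> w))"

lemma labelling_weight_Suc:
  "labelling_weight b M (Suc n) \<sigma> =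
     (\<Prod>c<b. M (\<sigma> []) (\<sigma> [c]) * labelling_weight b M n (subtree (verts b n) \<sigma> c))"
proof -
  have "labelling_weight b M (Suc n) \<sigma> = (\<Prod>c<b. \<Prod>u\<in>verts b n. M (\<sigma> (butlast (c # u))) (\<sigma> (c # u)))"
    unfolding labelling_weight_def verts_Suc_minus_Nil
    by (subst prod.UNION_disjoint) (auto simp: finite_verts prod.reindex)
  also have "\<dots> = (\<Prod>c<b. M (\<sigma> []) (\<sigma> [c]) * labelling_weight b M n (subtree (verts b n) \<sigma> c))"
  proof (rule prod.cong[OF refl])
    fix c
    have "(\<Prod>u\<in>verts b n. M (\<sigma> (butlast (c # u))) (\<sigma> (c # u))) =
          M (\<sigma> []) (\<sigma> [c]) * (\<Prod>u\<in>verts b n - {[]}. M (\<sigma> (c # butlast u)) (\<sigma> (c # u)))"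
      by (subst prod.remove[of _ "[]"]) (auto simp: finite_verts)
    also have "(\<Prod>u\<in>verts b n - {[]}. M (\<sigma> (c # butlast u)) (\<sigma> (c # u))) =
               labelling_weight b M n (subtree (verts b n) \<sigma> c)"
      unfolding labelling_weight_def subtree_def by (rule prod.cong) (auto simp: butlast_in_verts)
    finally show "(\<Prod>u\<in>verts b n. M (\<sigma> (butlast (c # u))) (\<sigma> (c # u))) =
          M (\<sigma> []) (\<sigma> [c]) * labelling_weight b M n (subtree (verts b n) \<sigma> c)" .
  qed
  finally show ?thesis .
qed

lemma tree_law_eq_sum_labellings:
  "tree_law b q M n l \<tau> =
     (\<Sum>\<sigma>\<in>{\<sigma> \<in> verts b n \<rightarrow>\<^sub>E {1..q}. \<sigma> [] = l}.
        of_bool (restrict \<sigma> (level b n) = \<tau>) * labelling_weight b M n \<sigma>)"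
proof -
  let ?L = "{\<sigma> \<in> verts b n \<rightarrow>\<^sub>E {1..q}. \<sigma> [] = l}"
  have "{\<sigma> \<in> verts b n \<rightarrow>\<^sub>E {1..q}. \<sigma> [] = l \<and> restrict \<sigma> (level b n) = \<tau>} =
        {\<sigma> \<in> ?L. restrict \<sigma> (level b n) = \<tau>}"
    by auto
  then have "tree_law b q M n l \<tau> =
      (\<Sum>\<sigma>\<in>?L. if restrict \<sigma> (level b n) = \<tau> then labelling_weight b M n \<sigma> else 0)"
    unfolding tree_law_def labelling_weight_def
    by (simp only:) (rule sum.inter_filter, simp add: finite_verts finite_PiE)
  also have "\<dots> = (\<Sum>\<sigma>\<in>?L. of_bool (restrict \<sigma> (level b n) = \<tau>) * labelling_weight b M n \<sigma>)"
    by (rule sum.cong) auto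
  finally show ?thesis .
qed

definition child_law :: "nat \<Rightarrow> nat \<Rightarrow> tmatrix \<Rightarrow> nat \<Rightarrow> nat \<Rightarrow> (nat list \<Rightarrow> nat) \<Rightarrow> real" where
  "child_law b q M n l \<eta> = (\<Sum>k=1..q. M l k * tree_law b q M n k \<eta>)"

lemma child_law_eq_sum_labellings:
  "child_law b q M n l \<eta> =
     (\<Sum>\<sigma>\<in>verts b n \<rightarrow>\<^sub>E {1..q}.
        M l (\<sigma> []) * (of_bool (restrict \<sigma> (level b n) = \<eta>) * labelling_weight b M n \<sigma>))"
proof -
  have "child_law b q M n l \<eta> =
     (\<Sum>k=1..q. \<Sum>\<sigma>\<in>{\<sigma> \<in> verts b n \<rightarrow>\<^sub>E {1..q}. \<sigma> [] = k}.
        M l (\<sigma> []) * (of_bool (restrict \<sigma> (level b n) = \<eta>) * labelling_weight b M n \<sigma>))"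
    unfolding child_law_def tree_law_eq_sum_labellings sum_distrib_left
    by (intro sum.cong refl) (simp del: sum_of_bool_mult_eq)
  also have "\<dots> = (\<Sum>\<sigma>\<in>verts b n \<rightarrow>\<^sub>E {1..q}.
        M l (\<sigma> []) * (of_bool (restrict \<sigma> (level b n) = \<eta>) * labelling_weight b M n \<sigma>))"
    by (rule sum.group) (auto simp: finite_verts finite_PiE)
  finally show ?thesis .
qed

lemma tree_law_Suc:
  assumes \<tau>: "\<tau> \<in> configs b q (Suc n)" and l: "l \<in> {1..q}"
  shows "tree_law b q M (Suc n) l \<tau> = (\<Prod>c<b. child_law b q M n l (subtree (level b n) \<tau> c))"
proof -
  define h where "h g = (\<Prod>c<b. M l (g c []) *
      (of_bool (restrict (g c) (level b n) = subtree (level b n) \<tau> c) * labelling_weight b M n (g c)))"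
    for g :: "nat \<Rightarrow> nat list \<Rightarrow> nat"
  have summand: "of_bool (restrict \<sigma> (level b (Suc n)) = \<tau>) * labelling_weight b M (Suc n) \<sigma> =
                 h (\<lambda>c\<in>{..<b}. subtree (verts b n) \<sigma> c)" if "\<sigma> [] = l" for \<sigma>
  proof -
    have "\<tau> \<in> extensional (level b (Suc n))"
      using \<tau> by (simp add: configs_def PiE_iff)
    then have "of_bool (restrict \<sigma> (level b (Suc n)) = \<tau>) =
               (\<Prod>c<b. of_bool (subtree (level b n) \<sigma> c = subtree (level b n) \<tau> c) :: real)"
      by (auto simp: restrict_level_Suc_eq_iff prod_of_bool)
    moreover have "h (\<lambda>c\<in>{..<b}. subtree (verts b n) \<sigma> c) =
      (\<Prod>c<b. M l (\<sigma> [c]) * (of_bool (subtree (level b n) \<sigma> c = subtree (level b n) \<tau> c) *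
                labelling_weight b M n (subtree (verts b n) \<sigma> c)))"
      unfolding h_def by (rule prod.cong) (auto simp: restrict_subtree level_subset_verts)
    ultimately show ?thesis
      by (simp add: labelling_weight_Suc prod.distrib that mult_ac)
  qed
  have "tree_law b q M (Suc n) l \<tau> =
        (\<Sum>\<sigma>\<in>{\<sigma> \<in> verts b (Suc n) \<rightarrow>\<^sub>E {1..q}. \<sigma> [] = l}. h (\<lambda>c\<in>{..<b}. subtree (verts b n) \<sigma> c))"
    unfolding tree_law_eq_sum_labellings by (intro sum.cong refl) (simp add: summand)
  also have "\<dots> = (\<Sum>g\<in>{..<b} \<rightarrow>\<^sub>E (verts b n \<rightarrow>\<^sub>E {1..q}). h g)"
    using sum.reindex_bij_betw[OF bij_betw_subtrees_verts[OF l]] .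
  also have "\<dots> = (\<Prod>c<b. \<Sum>\<sigma>\<in>verts b n \<rightarrow>\<^sub>E {1..q}. M l (\<sigma> []) *
      (of_bool (restrict \<sigma> (level b n) = subtree (level b n) \<tau> c) * labelling_weight b M n \<sigma>))"
    unfolding h_def by (rule prod_sum_PiE[symmetric]) (auto simp: finite_verts finite_PiE)
  finally show ?thesis
    by (simp add: child_law_eq_sum_labellings)
qed

lemma tree_law_0:
  assumes "l \<in> {1..q}"
  shows "tree_law b q M 0 l \<tau> = of_bool (\<tau> = (\<lambda>w\<in>{[]}. l))"
proof -
  have "{\<sigma> \<in> verts b 0 \<rightarrow>\<^sub>E {1..q}. \<sigma> [] = l} = {\<lambda>w\<in>{[]}. l}"
    using assms by (auto simp: verts_0 PiE_iff extensional_def fun_eq_iff)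
  then show ?thesis
    by (auto simp: tree_law_eq_sum_labellings labelling_weight_def verts_0 level_0)
qed

lemma tree_law_prob_vec:
  assumes st: "stochastic q M" and l: "l \<in> {1..q}"
  shows "prob_vec (configs b q n) (tree_law b q M n l)"
  using l
proof (induction n arbitrary: l)
  case 0
  have "(\<lambda>w\<in>{[]}. l) \<in> configs b q 0"
    using "0" by (simp add: configs_def level_0)
  then show ?case
    by (simp add: prob_vec_def tree_law_0[OF "0"] finite_configs)
next
  case (Suc n)
  have "prob_vec (configs b q n) (child_law b q M n l)"
    unfolding child_law_def
    by (rule prob_vec_mixture) (use st Suc in \<open>auto simp: stochastic_def prob_vec_def\<close>)
  then have "prob_vec ({..<b} \<rightarrow>\<^sub>E configs b q n) (\<lambda>g. \<Prod>c<b. child_law b q M n l (g c))"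
    by (intro prob_vec_prod) (auto simp: finite_configs)
  then have "prob_vec (configs b q (Suc n))
      (\<lambda>\<tau>. \<Prod>c<b. child_law b q M n l ((\<lambda>c\<in>{..<b}. subtree (level b n) \<tau> c) c))"
    by (rule prob_vec_reindex[OF bij_betw_subtrees_level[of b n "{1..q}", folded configs_def]])
  then show ?case
    by (subst prob_vec_cong[where \<nu> = "\<lambda>\<tau>. \<Prod>c<b. child_law b q M n l (subtree (level b n) \<tau> c)"])
       (simp_all add: tree_law_Suc[OF _ Suc.prems])
qed

lemma child_law_prob_vec:
  assumes "stochastic q M" "l \<in> {1..q}"
  shows "prob_vec (configs b q n) (child_law b q M n l)"
  unfolding child_law_def
  by (rule prob_vec_mixture) (use assms tree_law_prob_vec in \<open>auto simp: stochastic_def prob_vec_def\<close>)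

lemma dtv_eq_tv_dist: "dtv b q M n i j = tv_dist (configs b q n) (tree_law b q M n i) (tree_law b q M n j)"
  by (simp add: dtv_def tv_dist_def)

section \<open>The Potts channel\<close>

lemma potts_matrix_eq: "potts_matrix q \<delta> i k = \<delta> + (if i = k then 1 - real q * \<delta> else 0)"
  by (simp add: potts_matrix_def algebra_simps)

lemma child_law_potts:
  assumes "l \<in> {1..q}"
  shows "child_law b q (potts_matrix q \<delta>) n l \<eta> =
           \<delta> * (\<Sum>k=1..q. tree_law b q (potts_matrix q \<delta>) n k \<eta>)
           + (1 - real q * \<delta>) * tree_law b q (potts_matrix q \<delta>) n l \<eta>"
  using assms unfolding child_law_def potts_matrix_eq
  by (simp add: distrib_right sum.distrib sum_distrib_left if_distrib[where f = "\<lambda>x. x * _"]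
      cong: if_cong)

lemma dtv_Suc_le:
  assumes st: "stochastic q (potts_matrix q \<delta>)" and i: "i \<in> {1..q}" and j: "j \<in> {1..q}"
  shows "dtv b q (potts_matrix q \<delta>) (Suc n) i j
           \<le> 1 - (1 - \<bar>1 - real q * \<delta>\<bar> * dtv b q (potts_matrix q \<delta>) n i j) ^ b"
proof -
  let ?M = "potts_matrix q \<delta>"
  let ?P = "\<lambda>l g. \<Prod>c<b. child_law b q ?M n l (g c)"
  let ?split = "\<lambda>\<tau>. \<lambda>c\<in>{..<b}. subtree (level b n) \<tau> c"
  have "dtv b q ?M (Suc n) i j = tv_dist (configs b q (Suc n)) (\<lambda>\<tau>. ?P i (?split \<tau>)) (\<lambda>\<tau>. ?P j (?split \<tau>))"
    unfolding dtv_eq_tv_dist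
    by (rule tv_dist_cong) (simp_all add: tree_law_Suc[OF _ i] tree_law_Suc[OF _ j])
  also have "\<dots> = tv_dist ({..<b} \<rightarrow>\<^sub>E configs b q n) (?P i) (?P j)"
    by (rule tv_dist_reindex[OF bij_betw_subtrees_level[of b n "{1..q}", folded configs_def]])
  also have "\<dots> \<le> 1 - (\<Prod>c<b. 1 - tv_dist (configs b q n) (child_law b q ?M n i) (child_law b q ?M n j))"
    by (rule tv_dist_prod_le)
       (simp_all add: finite_configs child_law_prob_vec[OF st i] child_law_prob_vec[OF st j])
  also have "tv_dist (configs b q n) (child_law b q ?M n i) (child_law b q ?M n j) =
             \<bar>1 - real q * \<delta>\<bar> * dtv b q ?M n i j"
    unfolding dtv_eq_tv_dist
    by (rule tv_dist_scale) (simp add: child_law_potts[OF i] child_law_potts[OF j] algebra_simps)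
  finally show ?thesis
    by simp
qed

lemma mpow_deterministic:
  assumes \<pi>: "\<pi> ` {1..q} \<subseteq> {1..q}"
    and M: "\<And>i j. i \<in> {1..q} \<Longrightarrow> j \<in> {1..q} \<Longrightarrow> M i j = of_bool (j = \<pi> i)"
    and i: "i \<in> {1..q}" and j: "j \<in> {1..q}"
  shows "mpow q M k i j = of_bool (j = (\<pi> ^^ k) i)"
  using j
proof (induction k arbitrary: j)
  case (Suc k)
  have orbit: "(\<pi> ^^ k) i \<in> {1..q}"
    by (induction k) (use i \<pi> in \<open>auto simp: image_subset_iff\<close>)
  have "mpow q M (Suc k) i j = (\<Sum>l=1..q. of_bool (l = (\<pi> ^^ k) i) * M l j)"
    using Suc by simp
  also have "\<dots> = M ((\<pi> ^^ k) i) j"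
    using orbit by (simp add: of_bool_def if_distrib[where f = "\<lambda>x. x * _"] cong: if_cong)
  finally show ?case
    using M[OF orbit Suc.prems] by simp
qed auto

lemma not_ergodic_deterministic:
  assumes q: "2 \<le> q" and \<pi>: "\<pi> ` {1..q} \<subseteq> {1..q}"
    and M: "\<And>i j. i \<in> {1..q} \<Longrightarrow> j \<in> {1..q} \<Longrightarrow> M i j = of_bool (j = \<pi> i)"
  shows "\<not> ergodic q M"
proof
  assume "ergodic q M"
  then obtain k where "\<forall>i\<in>{1..q}. \<forall>j\<in>{1..q}. 0 < mpow q M k i j"
    by (auto simp: ergodic_def)
  then have "0 < mpow q M k 1 1" "0 < mpow q M k 1 2"
    using q by auto
  moreover have "mpow q M k 1 j = of_bool (j = (\<pi> ^^ k) 1)" if "j \<in> {1, 2}" for j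
    using q that by (intro mpow_deterministic[OF \<pi> M]) auto
  ultimately show False
    by simp
qed

lemma stochastic_potts_abs_eigenvalue_ge_1:
  assumes q: "2 \<le> q" and st: "stochastic q (potts_matrix q \<delta>)" and "1 \<le> \<bar>1 - real q * \<delta>\<bar>"
  shows "\<delta> = 0 \<or> (q = 2 \<and> \<delta> = 1)"
proof -
  have big: "real q * \<delta> \<le> 0 \<or> 2 \<le> real q * \<delta>"
    using assms(3) by linarith
  have "0 \<le> potts_matrix q \<delta> 1 2" "0 \<le> potts_matrix q \<delta> 1 1"
    using q st by (auto simp: stochastic_def)
  then have \<delta>: "0 \<le> \<delta>" "(real q - 1) * \<delta> \<le> 1"
    by (simp_all add: potts_matrix_def)
  show ?thesis
  proof (cases "2 \<le> real q * \<delta>")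
    case True
    then have "1 \<le> \<delta>"
      using \<delta>(2) by (simp add: algebra_simps)
    then have "real q - 1 \<le> (real q - 1) * \<delta>"
      using q by (simp add: mult_le_cancel_left1)
    then have "q = 2"
      using q \<delta>(2) by linarith
    then show ?thesis
      using \<delta>(2) \<open>1 \<le> \<delta>\<close> by simp
  qed (use big \<delta>(1) q in \<open>simp add: mult_le_0_iff\<close>)
qed

lemma ergodic_potts_abs_eigenvalue_less_1:
  assumes q: "2 \<le> q" and erg: "ergodic q (potts_matrix q \<delta>)"
  shows "\<bar>1 - real q * \<delta>\<bar> < 1"
proof (rule ccontr)
  assume "\<not> ?thesis"
  with q erg have "\<delta> = 0 \<or> (q = 2 \<and> \<delta> = 1)"
    by (intro stochastic_potts_abs_eigenvalue_ge_1) (simp_all add: ergodic_def)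
  then show False
  proof
    assume "\<delta> = 0"
    have "\<not> ergodic q (potts_matrix q 0)"
      by (rule not_ergodic_deterministic[OF q, where \<pi> = id]) (auto simp: potts_matrix_def)
    with erg \<open>\<delta> = 0\<close> show False
      by simp
  next
    assume "q = 2 \<and> \<delta> = 1"
    have "\<not> ergodic 2 (potts_matrix 2 1)"
    proof (rule not_ergodic_deterministic[where \<pi> = "\<lambda>i. 3 - i"])
      fix i j :: nat assume "i \<in> {1..2}" "j \<in> {1..2}"
      then have "i = 1 \<or> i = 2" "j = 1 \<or> j = 2"
        by auto
      then show "potts_matrix 2 1 i j = of_bool (j = 3 - i)"
        by (elim disjE) (simp_all add: potts_matrix_def)
    next
      show "(\<lambda>i. 3 - i) ` {1..2} \<subseteq> {1..2::nat}"
        by auto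
    qed simp
    with erg \<open>q = 2 \<and> \<delta> = 1\<close> show False
      by simp
  qed
qed

theorem mainTheorem4:
  fixes q b :: nat and \<delta> :: real
  assumes "q \<ge> 2"
    and "ergodic q (potts_matrix q \<delta>)"
    and "b > 0"
    and "real b * \<bar>1 - real q * \<delta>\<bar> \<le> 1"
  shows "\<not> reconstruction_solvable b q (potts_matrix q \<delta>)"
proof -
  let ?M = "potts_matrix q \<delta>"
  define \<kappa> where "\<kappa> = \<bar>1 - real q * \<delta>\<bar>"
  have st: "stochastic q ?M"
    using assms(2) by (simp add: ergodic_def)
  have \<kappa>: "0 \<le> \<kappa>" "\<kappa> < 1"
    using ergodic_potts_abs_eigenvalue_less_1[OF assms(1,2)] by (simp_all add: \<kappa>_def)
  have "(\<lambda>n. dtv b q ?M n i j) \<longlonglongrightarrow> 0" if i: "i \<in> {1..q}" and j: "j \<in> {1..q}" for i j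
  proof (rule LIMSEQ_zero_if_le_subdiagonal_map[where f = "\<lambda>y. 1 - (1 - \<kappa> * y) ^ b"])
    show "continuous_on {0..1} (\<lambda>y. 1 - (1 - \<kappa> * y) ^ b)"
      by (intro continuous_intros)
    show "1 - (1 - \<kappa> * y) ^ b < y" if "0 < y" "y \<le> 1" for y
      using one_minus_power_below_diagonal[OF \<kappa> assms(3)] assms(4) that by (simp add: \<kappa>_def)
    show "dtv b q ?M 0 i j \<le> 1"
      unfolding dtv_eq_tv_dist using tree_law_prob_vec[OF st] i j by (intro tv_dist_le_1)
    show "dtv b q ?M (Suc n) i j \<le> 1 - (1 - \<kappa> * dtv b q ?M n i j) ^ b" for n
      using dtv_Suc_le[OF st i j] by (simp add: \<kappa>_def)
  qed (simp_all add: dtv_eq_tv_dist tv_dist_nonneg assms(3))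
  then show ?thesis
    unfolding reconstruction_solvable_def using limI by fastforce
qed

end
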